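(* Fix $q\in[0,1)$. Let $F_n=\max\{I_1,\dots,I_n\}-n$, where $(I_i)_{i\ge1}$ comes from the infinite Bernoulli model. Then for any sequence $(a_n)_{n\ge1}$ of positive reals with $a_n/\log n\to\infty$, we have $F_n/a_n\to0$ almost surely. In particular $F_n/n\to0$ almost surely.
   Context: Infinite Bernoulli model: $(B_{i,j})_{i,j\ge1}$ are independent Bernoulli$(1-q)$ random variables and $I_i=\min\{j\notin\{I_1,\dots,I_{i-1}\}:B_{i,j}=1\}$ for $i\ge1$. *)

theory Defs
  imports "HOL-Probability.Probability"
begin

text \<open>For a realisation b of the array (B_{i,j})_{i,j>=1},
  bern_used b i is the set {I_1,...,I_i} and bern_I b i is I_i (for i >= 1):
  I_i = min {j >= 1. j not in {I_1,...,I_(i-1)} and B_{i,j} = 1}.\<close>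

fun bern_used :: "(nat \<Rightarrow> nat \<Rightarrow> bool) \<Rightarrow> nat \<Rightarrow> nat set" where
  "bern_used b 0 = {}"
| "bern_used b (Suc i) =
     insert (LEAST j. 1 \<le> j \<and> j \<notin> bern_used b i \<and> b (Suc i) j) (bern_used b i)"

definition bern_I :: "(nat \<Rightarrow> nat \<Rightarrow> bool) \<Rightarrow> nat \<Rightarrow> nat" where
  "bern_I b i = (LEAST j. 1 \<le> j \<and> j \<notin> bern_used b (i - 1) \<and> b i j)"

definition bern_F :: "(nat \<Rightarrow> nat \<Rightarrow> bool) \<Rightarrow> nat \<Rightarrow> real" where
  "bern_F b n = real (Max (bern_I b ` {1..n})) - real n"

end

(* Rows 1, ..., j - 1 of the array occupy at most j - 1 columns and are independent of row j.
   So I_j >= j + k forces row j to fail in at least k columns among 1, ..., j + k - 1 that are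
   still free, whence P(I_j >= j + k) <= q^k.  Choosing k of order log j makes these
   probabilities summable, and Borel-Cantelli gives I_j < j + O(log j) for all large j, almost
   surely.  Then F_n <= C + O(log n) = o(a_n), while F_n >= 0 because I_1, ..., I_n are n
   distinct positive integers. *)

theory Submission
  imports Defs "HOL-Real_Asymp.Real_Asymp"
begin

lemma bern_used_Suc: "bern_used b (Suc i) = insert (bern_I b (Suc i)) (bern_used b i)"
  by (simp add: bern_I_def)

lemma bern_used_eq_image: "bern_used b i = bern_I b ` {1..i}"
proof (induction i)
  case (Suc i)
  have "{1..Suc i} = insert (Suc i) {1..i}" by auto
  with Suc show ?case by (subst bern_used_Suc) simp
qed simp

lemma card_bern_used_le: "card (bern_used b i) \<le> i"
  unfolding bern_used_eq_image using card_image_le[of "{1..i}" "bern_I b"] by simp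

lemma bern_used_cong:
  assumes "\<And>i c. 1 \<le> i \<Longrightarrow> i \<le> m \<Longrightarrow> 1 \<le> c \<Longrightarrow> b i c = b' i c" and "i \<le> m"
  shows "bern_used b i = bern_used b' i"
  using \<open>i \<le> m\<close>
proof (induction i)
  case (Suc i)
  then have IH: "bern_used b i = bern_used b' i" by simp
  have "(\<lambda>j. 1 \<le> j \<and> j \<notin> bern_used b i \<and> b (Suc i) j)
      = (\<lambda>j. 1 \<le> j \<and> j \<notin> bern_used b' i \<and> b' (Suc i) j)"
    using assms(1) Suc.prems IH by fastforce
  with IH show ?case by simp
qed simp

text \<open>Without this, the LEAST in bern_I may range over an empty set and yield a junk value.\<close>
definition bern_I_defined :: "(nat \<Rightarrow> nat \<Rightarrow> bool) \<Rightarrow> bool" where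
  "bern_I_defined b \<longleftrightarrow> (\<forall>j\<ge>1. \<exists>c\<ge>1. c \<notin> bern_used b (j - 1) \<and> b j c)"

lemma bern_I_definedD:
  assumes "bern_I_defined b" "1 \<le> j"
  shows "1 \<le> bern_I b j" "bern_I b j \<notin> bern_used b (j - 1)"
proof -
  from assms obtain c where "1 \<le> c \<and> c \<notin> bern_used b (j - 1) \<and> b j c"
    unfolding bern_I_defined_def by auto
  then have "1 \<le> bern_I b j \<and> bern_I b j \<notin> bern_used b (j - 1) \<and> b j (bern_I b j)"
    unfolding bern_I_def by (rule LeastI)
  then show "1 \<le> bern_I b j" "bern_I b j \<notin> bern_used b (j - 1)" by auto
qed

lemma inj_on_bern_I:
  assumes "bern_I_defined b"
  shows "inj_on (bern_I b) {1..n}"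
proof (rule linorder_inj_onI')
  fix i j :: nat assume "i \<in> {1..n}" "j \<in> {1..n}" "i < j"
  then have "bern_I b i \<in> bern_used b (j - 1)" unfolding bern_used_eq_image by auto
  moreover have "bern_I b j \<notin> bern_used b (j - 1)"
    using bern_I_definedD(2)[OF assms] \<open>j \<in> {1..n}\<close> by simp
  ultimately show "bern_I b i \<noteq> bern_I b j" by auto
qed

lemma bern_F_nonneg:
  assumes "bern_I_defined b" "1 \<le> n"
  shows "0 \<le> bern_F b n"
proof -
  let ?S = "bern_I b ` {1..n}"
  have "?S \<subseteq> {1..Max ?S}"
    using bern_I_definedD(1)[OF assms(1)] Max_ge[of ?S] by fastforce
  then have "card ?S \<le> Max ?S" using card_mono[of "{1..Max ?S}" ?S] by simp
  moreover have "card ?S = n" using card_image[OF inj_on_bern_I[OF assms(1)]] by simp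
  ultimately show ?thesis unfolding bern_F_def by simp
qed

lemma bern_F_le:
  assumes "1 \<le> n" "\<And>j. 1 \<le> j \<Longrightarrow> j \<le> n \<Longrightarrow> real (bern_I b j) - real j \<le> U"
  shows "bern_F b n \<le> U"
proof -
  have "Max (bern_I b ` {1..n}) \<in> bern_I b ` {1..n}" using assms(1) by (intro Max_in) auto
  then obtain j where "j \<in> {1..n}" "Max (bern_I b ` {1..n}) = bern_I b j" by auto
  then show ?thesis unfolding bern_F_def using assms(2)[of j] by auto
qed

lemma bern_F_le_mono_bound:
  assumes "mono k" "eventually (\<lambda>n. bern_I b n < n + k n) sequentially"
  obtains C where "\<And>n. 1 \<le> n \<Longrightarrow> bern_F b n \<le> C + real (k n)"
proof -
  obtain n0 where n0: "\<And>n. n \<ge> n0 \<Longrightarrow> bern_I b n < n + k n"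
    using assms(2) unfolding eventually_sequentially by blast
  define C where "C = (\<Sum>j\<in>{1..n0}. real (bern_I b j))"
  have "bern_F b n \<le> C + real (k n)" if "1 \<le> n" for n
    using that
  proof (rule bern_F_le)
    fix j assume j: "1 \<le> j" "j \<le> n"
    show "real (bern_I b j) - real j \<le> C + real (k n)"
    proof (cases "j \<le> n0")
      case True
      then have "real (bern_I b j) \<le> C" unfolding C_def using j by (intro member_le_sum) auto
      then show ?thesis by simp
    next
      case False
      then have "bern_I b j < j + k j" using n0 by simp
      moreover have "k j \<le> k n" using \<open>mono k\<close> j by (simp add: monoD)
      moreover have "0 \<le> C" unfolding C_def by (intro sum_nonneg) auto
      ultimately show ?thesis by linarith
    qed
  qed
  then show ?thesis using that by blast
qed

lemma mono_nat_ceiling_ln: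
  assumes "0 \<le> c"
  shows "mono (\<lambda>n. nat \<lceil>c * ln (real n)\<rceil>)"
proof (rule monoI)
  fix m n :: nat assume "m \<le> n"
  then have "ln (real m) \<le> ln (real n)" by (cases "m = 0"; cases "n = 0") auto
  then show "nat \<lceil>c * ln (real m)\<rceil> \<le> nat \<lceil>c * ln (real n)\<rceil>"
    using assms by (intro nat_mono ceiling_mono mult_left_mono)
qed

lemma summable_power_nat_ceiling_ln:
  fixes q :: real
  assumes "0 \<le> q" "q < 1"
  obtains c where "0 \<le> c" "summable (\<lambda>n. q ^ nat \<lceil>c * ln (real n)\<rceil>)"
proof -
  define r where "r = max q (1/2)"
  have r: "0 < r" "r < 1" "q \<le> r" using assms by (auto simp: r_def)
  define c where "c = 2 / - ln r"
  have "0 < c" using r by (simp add: c_def)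
  have bound: "q ^ nat \<lceil>c * ln (real n)\<rceil> \<le> real n powr -2" if "1 \<le> n" for n
  proof -
    have ln_nonneg: "0 \<le> c * ln (real n)" using \<open>0 < c\<close> that by simp
    have "q ^ nat \<lceil>c * ln (real n)\<rceil> \<le> r ^ nat \<lceil>c * ln (real n)\<rceil>"
      using assms r by (intro power_mono) auto
    also have "\<dots> = r powr real (nat \<lceil>c * ln (real n)\<rceil>)" using r by (simp add: powr_realpow)
    also have "\<dots> \<le> r powr (c * ln (real n))"
    proof (rule powr_mono')
      show "c * ln (real n) \<le> real (nat \<lceil>c * ln (real n)\<rceil>)" using ln_nonneg by linarith
    qed (use r in auto)
    also have "\<dots> = exp (c * ln (real n) * ln r)" using r by (simp add: powr_def)
    also have "c * ln (real n) * ln r = -2 * ln (real n)" using r by (simp add: c_def field_simps)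
    also have "exp (-2 * ln (real n)) = real n powr -2" using that by (simp add: powr_def)
    finally show ?thesis .
  qed
  have "summable (\<lambda>n. q ^ nat \<lceil>c * ln (real n)\<rceil>)"
  proof (rule summable_comparison_test'[where N=1])
    show "summable (\<lambda>n. real n powr -2)" by (simp add: summable_real_powr_iff)
    show "norm (q ^ nat \<lceil>c * ln (real n)\<rceil>) \<le> real n powr -2" if "1 \<le> n" for n
      using bound[OF that] assms(1) by simp
  qed
  with \<open>0 < c\<close> show ?thesis by (intro that) simp_all
qed

lemma ln_bound_div_tendsto_zero:
  assumes a_growth: "filterlim (\<lambda>n. a n / ln (real n)) at_top sequentially"
  shows "(\<lambda>n. (C + c * ln (real n)) / a n) \<longlonglongrightarrow> 0"
proof -
  have ln_top: "filterlim (\<lambda>n. ln (real n)) at_top sequentially" by real_asymp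
  have "eventually (\<lambda>n. 1 \<le> a n / ln (real n)) sequentially"
    using a_growth by (simp add: filterlim_at_top)
  moreover have "eventually (\<lambda>n. 0 < ln (real n)) sequentially"
    using ln_top by (simp add: filterlim_at_top_dense)
  ultimately have "eventually (\<lambda>n. ln (real n) \<le> a n) sequentially"
    by eventually_elim (simp add: field_simps)
  then have "filterlim a at_top sequentially" by (rule filterlim_at_top_mono[OF ln_top])
  then have "(\<lambda>n. C * inverse (a n) + c * inverse (a n / ln (real n))) \<longlonglongrightarrow> C * 0 + c * 0"
    by (intro tendsto_intros tendsto_inverse_0_at_top a_growth)
  then show ?thesis by (simp add: divide_inverse algebra_simps)
qed

lemma bern_F_div_tendsto_zero:
  assumes "bern_I_defined b" "0 \<le> c"
    and "eventually (\<lambda>n. bern_I b n < n + nat \<lceil>c * ln (real n)\<rceil>) sequentially"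
    and a_pos: "\<And>n. 1 \<le> n \<Longrightarrow> a n > 0"
    and a_growth: "filterlim (\<lambda>n. a n / ln (real n)) at_top sequentially"
  shows "(\<lambda>n. bern_F b n / a n) \<longlonglongrightarrow> 0"
proof -
  obtain C where C: "\<And>n. 1 \<le> n \<Longrightarrow> bern_F b n \<le> C + real (nat \<lceil>c * ln (real n)\<rceil>)"
    using bern_F_le_mono_bound[OF mono_nat_ceiling_ln[OF \<open>0 \<le> c\<close>] assms(3)] by blast
  show ?thesis
  proof (rule tendsto_sandwich[OF _ _ tendsto_const ln_bound_div_tendsto_zero[OF a_growth]])
    show "eventually (\<lambda>n. 0 \<le> bern_F b n / a n) sequentially"
      using eventually_ge_at_top[of 1]
      by eventually_elim (use bern_F_nonneg[OF assms(1)] a_pos in \<open>auto intro!: divide_nonneg_pos\<close>)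
    show "eventually (\<lambda>n. bern_F b n / a n \<le> (C + 1 + c * ln (real n)) / a n) sequentially"
      using eventually_ge_at_top[of 1]
    proof eventually_elim
      case (elim n)
      have "0 \<le> c * ln (real n)" using \<open>0 \<le> c\<close> elim by simp
      then have "real (nat \<lceil>c * ln (real n)\<rceil>) \<le> c * ln (real n) + 1" by linarith
      then show ?case using C[OF elim] a_pos[OF elim] by (intro divide_right_mono) auto
    qed
  qed
qed

lemma measurable_bern_I:
  assumes "\<And>c. Measurable.pred N (\<lambda>x. c \<in> bern_used (b x) (j - 1))"
    and "\<And>c. 1 \<le> c \<Longrightarrow> Measurable.pred N (\<lambda>x. b x j c)"
  shows "(\<lambda>x. bern_I (b x) j) \<in> measurable N (count_space UNIV)"
  unfolding bern_I_def
proof (rule measurable_Least)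
  fix c
  show "Measurable.pred N (\<lambda>x. 1 \<le> c \<and> c \<notin> bern_used (b x) (j - 1) \<and> b x j c)"
  proof (cases "1 \<le> c")
    case True
    then show ?thesis
      using assms(1) assms(2)[OF True] by (simp only: True simp_thms) (intro pred_intros_logic(2,3))
  qed simp
qed

lemma pred_mem_bern_used:
  assumes "\<And>i c. 1 \<le> i \<Longrightarrow> i \<le> m \<Longrightarrow> 1 \<le> c \<Longrightarrow> Measurable.pred N (\<lambda>x. b x i c)"
    and "i \<le> m"
  shows "Measurable.pred N (\<lambda>x. c \<in> bern_used (b x) i)"
  using \<open>i \<le> m\<close>
proof (induction i arbitrary: c)
  case (Suc i)
  have "(\<lambda>x. bern_I (b x) (Suc i)) \<in> measurable N (count_space UNIV)"
    using Suc assms(1) by (intro measurable_bern_I) auto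
  then have "Measurable.pred N (\<lambda>x. c = bern_I (b x) (Suc i))"
    by (rule pred_count_space_const2)
  with Suc show ?case
    unfolding bern_used_Suc insert_iff by (intro pred_intros_logic(5)) auto
qed simp

lemma pred_bern_used_Int_eq:
  assumes "\<And>i c. 1 \<le> i \<Longrightarrow> i \<le> m \<Longrightarrow> 1 \<le> c \<Longrightarrow> Measurable.pred N (\<lambda>x. b x i c)"
    and "i \<le> m" "finite D"
  shows "Measurable.pred N (\<lambda>x. bern_used (b x) i \<inter> D = S)"
proof -
  have "Measurable.pred N (\<lambda>x. S \<subseteq> D \<and> (\<forall>c\<in>D. (c \<in> bern_used (b x) i) = (c \<in> S)))"
  proof (cases "S \<subseteq> D")
    case True
    have "Measurable.pred N (\<lambda>x. \<forall>c\<in>D. (c \<in> bern_used (b x) i) = (c \<in> S))"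
      using assms by (intro pred_intros_finite(3) pred_intros_logic(6) pred_mem_bern_used) simp_all
    with True show ?thesis by simp
  qed simp
  moreover have "(bern_used (b x) i \<inter> D = S) \<longleftrightarrow> S \<subseteq> D \<and> (\<forall>c\<in>D. (c \<in> bern_used (b x) i) = (c \<in> S))"
    for x by blast
  ultimately show ?thesis by simp
qed

locale bernoulli_model = prob_space M for M :: "'w measure" +
  fixes B :: "nat \<Rightarrow> nat \<Rightarrow> 'w \<Rightarrow> bool" and q :: real
  assumes q_nonneg: "0 \<le> q" and q_less_1: "q < 1"
    and measurable_B: "\<And>i j. 1 \<le> i \<Longrightarrow> 1 \<le> j \<Longrightarrow> B i j \<in> measurable M (count_space UNIV)"
    and indep_B: "indep_vars (\<lambda>_. count_space UNIV) (\<lambda>(i, j). B i j) ({1..} \<times> {1..})"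
    and prob_B: "\<And>i j. 1 \<le> i \<Longrightarrow> 1 \<le> j \<Longrightarrow> prob {\<omega> \<in> space M. B i j \<omega>} = 1 - q"
begin

abbreviation sample :: "'w \<Rightarrow> nat \<Rightarrow> nat \<Rightarrow> bool" where
  "sample \<omega> \<equiv> \<lambda>i j. B i j \<omega>"

lemma pred_B: "1 \<le> i \<Longrightarrow> 1 \<le> c \<Longrightarrow> Measurable.pred M (B i c)"
  using measurable_B by simp

lemma prob_not_B:
  assumes "1 \<le> i" "1 \<le> c"
  shows "prob {\<omega> \<in> space M. \<not> B i c \<omega>} = q"
proof -
  have "{\<omega> \<in> space M. \<not> B i c \<omega>} = space M - {\<omega> \<in> space M. B i c \<omega>}" by auto
  moreover have "{\<omega> \<in> space M. B i c \<omega>} \<in> events" using pred_B[OF assms] by (simp add: pred_def)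
  ultimately show ?thesis using prob_compl prob_B[OF assms] by simp
qed

lemma pred_mem_used: "Measurable.pred M (\<lambda>\<omega>. c \<in> bern_used (sample \<omega>) i)"
  by (rule pred_mem_bern_used[of i]) (auto intro: pred_B)

lemma measurable_I: "1 \<le> j \<Longrightarrow> (\<lambda>\<omega>. bern_I (sample \<omega>) j) \<in> measurable M (count_space UNIV)"
  by (intro measurable_bern_I pred_mem_used pred_B)

lemma pred_used_Int_eq: "finite D \<Longrightarrow> Measurable.pred M (\<lambda>\<omega>. bern_used (sample \<omega>) i \<inter> D = S)"
  by (rule pred_bern_used_Int_eq[OF _ order_refl]) (auto intro: pred_B)

lemma indep_used_Int_and_misses:
  fixes C D S :: "nat set"
  assumes "1 \<le> j" "finite D" "C \<subseteq> {1..}"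
  shows "indep_events (\<lambda>l. case l of
      None \<Rightarrow> {\<omega> \<in> space M. bern_used (sample \<omega>) (j - 1) \<inter> D = S}
    | Some c \<Rightarrow> {\<omega> \<in> space M. \<not> B j c \<omega>}) (insert None (Some ` C))"
proof -
  define K where "K l = (case l of None \<Rightarrow> {1..<j} \<times> {1..} | Some c \<Rightarrow> {(j, c)})" for l :: "nat option"
  define L where "L = insert None (Some ` C)"
  define P where "P l = (\<lambda>f :: nat \<times> nat \<Rightarrow> bool. case l of
      None \<Rightarrow> bern_used (\<lambda>i c. f (i, c)) (j - 1) \<inter> D = S
    | Some c \<Rightarrow> \<not> f (j, c))" for l
  have "indep_vars (\<lambda>l. PiM (K l) (\<lambda>_. count_space UNIV)) (\<lambda>l \<omega>. \<lambda>p\<in>K l. (\<lambda>(i, c). B i c) p \<omega>) L"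
  proof (rule indep_vars_restrict[OF indep_B])
    show "K l \<subseteq> {1..} \<times> {1..}" if "l \<in> L" for l
      using that assms(1,3) by (auto simp: K_def L_def)
    show "disjoint_family_on K L"
      by (auto simp: disjoint_family_on_def K_def L_def)
  qed
  then have "indep_events (\<lambda>l. {\<omega> \<in> space M. P l (\<lambda>p\<in>K l. (\<lambda>(i, c). B i c) p \<omega>)}) L"
  proof (rule indep_eventsI_indep_vars)
    fix l
    have comp: "Measurable.pred (PiM (K l) (\<lambda>_. count_space UNIV)) (\<lambda>f. f p)" if "p \<in> K l" for p
      using that by (rule measurable_component_singleton)
    have "Measurable.pred (PiM (K l) (\<lambda>_. count_space UNIV)) (P l)"
    proof (cases l)
      case None
      have "Measurable.pred (PiM (K l) (\<lambda>_. count_space UNIV))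
          (\<lambda>f. bern_used (\<lambda>i c. f (i, c)) (j - 1) \<inter> D = S)"
      proof (rule pred_bern_used_Int_eq[OF _ order_refl assms(2)])
        fix i c :: nat assume "1 \<le> i" "i \<le> j - 1" "1 \<le> c"
        then show "Measurable.pred (PiM (K l) (\<lambda>_. count_space UNIV)) (\<lambda>f. f (i, c))"
          by (intro comp) (auto simp: None K_def)
      qed
      then show ?thesis by (simp add: None P_def)
    next
      case (Some c)
      then have "Measurable.pred (PiM (K l) (\<lambda>_. count_space UNIV)) (\<lambda>f. \<not> f (j, c))"
        by (intro pred_intros_logic(2) comp) (simp add: K_def)
      then show ?thesis by (simp add: Some P_def)
    qed
    then show "{f \<in> space (PiM (K l) (\<lambda>_. count_space UNIV)). P l f} \<in> sets (PiM (K l) (\<lambda>_. count_space UNIV))"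
      by (simp add: pred_def)
  qed
  moreover have "{\<omega> \<in> space M. P l (\<lambda>p\<in>K l. (\<lambda>(i, c). B i c) p \<omega>)} = (case l of
      None \<Rightarrow> {\<omega> \<in> space M. bern_used (sample \<omega>) (j - 1) \<inter> D = S}
    | Some c \<Rightarrow> {\<omega> \<in> space M. \<not> B j c \<omega>})" for l
  proof (cases l)
    case None
    have "bern_used (\<lambda>i c. (\<lambda>p\<in>K None. (\<lambda>(i, c). B i c) p \<omega>) (i, c)) (j - 1)
        = bern_used (sample \<omega>) (j - 1)" for \<omega>
      by (rule bern_used_cong[where m="j - 1"]) (auto simp: K_def)
    then show ?thesis by (simp add: None P_def)
  qed (simp add: P_def K_def)
  ultimately show ?thesis by (simp only: L_def)
qed

lemma prob_used_Int_misses: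
  fixes C D S :: "nat set"
  assumes "1 \<le> j" "finite D" "finite C" "C \<subseteq> {1..}"
  shows "prob ({\<omega> \<in> space M. bern_used (sample \<omega>) (j - 1) \<inter> D = S} \<inter> {\<omega> \<in> space M. \<forall>c\<in>C. \<not> B j c \<omega>})
    = prob {\<omega> \<in> space M. bern_used (sample \<omega>) (j - 1) \<inter> D = S} * q ^ card C"
proof -
  define E where "E = (\<lambda>l. case l of
      None \<Rightarrow> {\<omega> \<in> space M. bern_used (sample \<omega>) (j - 1) \<inter> D = S}
    | Some c \<Rightarrow> {\<omega> \<in> space M. \<not> B j c \<omega>})"
  have "indep_events E (insert None (Some ` C))"
    unfolding E_def using assms(1,2,4) by (rule indep_used_Int_and_misses)
  then have "prob (\<Inter>l\<in>insert None (Some ` C). E l) = (\<Prod>l\<in>insert None (Some ` C). prob (E l))"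
    unfolding indep_events_def by (elim conjE allE[of _ "insert None (Some ` C)"]) (simp add: assms(3))
  moreover have "(\<Inter>l\<in>insert None (Some ` C). E l) = E None \<inter> {\<omega> \<in> space M. \<forall>c\<in>C. \<not> B j c \<omega>}"
    by (auto simp: E_def)
  moreover have "(\<Prod>l\<in>insert None (Some ` C). prob (E l)) = prob (E None) * (\<Prod>c\<in>C. prob (E (Some c)))"
    using assms(3) by (simp add: prod.reindex comp_def)
  moreover have "(\<Prod>c\<in>C. prob (E (Some c))) = (\<Prod>c\<in>C. q)"
    using prob_not_B[OF assms(1)] assms(4) by (intro prod.cong) (auto simp: E_def)
  ultimately show ?thesis by (simp add: E_def)
qed

definition no_free_hit :: "nat \<Rightarrow> nat \<Rightarrow> 'w set" where
  "no_free_hit j N =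
    {\<omega> \<in> space M. \<forall>c\<in>{1..N}. c \<notin> bern_used (sample \<omega>) (j - 1) \<longrightarrow> \<not> B j c \<omega>}"

lemma no_free_hit_sets: "1 \<le> j \<Longrightarrow> no_free_hit j N \<in> events"
  unfolding no_free_hit_def
  by (intro predE pred_intros_finite(3) pred_intros_logic(4) pred_intros_logic(2) pred_mem_used pred_B)
    auto

text \<open>Split according to the trace S of the used columns on {1..N}: it has at most j - 1
  elements, so row j must miss at least N + 1 - j independent cells.\<close>
lemma prob_no_free_hit:
  assumes "1 \<le> j" "j - 1 \<le> N"
  shows "prob (no_free_hit j N) \<le> q ^ (N + 1 - j)"
proof -
  define U where "U S = {\<omega> \<in> space M. bern_used (sample \<omega>) (j - 1) \<inter> {1..N} = S}" for S
  define Z where "Z S = {\<omega> \<in> space M. \<forall>c\<in>{1..N} - S. \<not> B j c \<omega>}" for S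
  have U_sets: "U S \<in> events" for S
    unfolding U_def using pred_used_Int_eq[of "{1..N}"] by (simp add: pred_def)
  have Z_sets: "Z S \<in> events" for S
    unfolding Z_def using assms(1)
    by (intro predE pred_intros_finite(3) pred_intros_logic(2) pred_B) auto
  have U_Z: "prob (U S \<inter> Z S) \<le> prob (U S) * q ^ (N + 1 - j)" if "S \<subseteq> {1..N}" for S
  proof (cases "U S = {}")
    case False
    then obtain \<omega> where "\<omega> \<in> U S" by auto
    then have "card S \<le> card (bern_used (sample \<omega>) (j - 1))"
      by (auto simp: U_def bern_used_eq_image intro!: card_mono)
    also have "\<dots> \<le> j - 1" by (rule card_bern_used_le)
    finally have "N + 1 - j \<le> card ({1..N} - S)"
      using that assms by (simp add: card_Diff_subset finite_subset)
    then have "q ^ card ({1..N} - S) \<le> q ^ (N + 1 - j)"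
      using q_nonneg q_less_1 by (intro power_decreasing) auto
    moreover have "prob (U S \<inter> Z S) = prob (U S) * q ^ card ({1..N} - S)"
      unfolding U_def Z_def using assms(1) by (intro prob_used_Int_misses) auto
    ultimately show ?thesis by (simp add: mult_left_mono)
  qed simp
  have "no_free_hit j N \<subseteq> (\<Union>S\<in>Pow {1..N}. U S \<inter> Z S)"
    by (auto simp: no_free_hit_def U_def Z_def)
  then have "prob (no_free_hit j N) \<le> prob (\<Union>S\<in>Pow {1..N}. U S \<inter> Z S)"
    using U_sets Z_sets by (intro finite_measure_mono) auto
  also have "\<dots> \<le> (\<Sum>S\<in>Pow {1..N}. prob (U S \<inter> Z S))"
    using U_sets Z_sets by (intro finite_measure_subadditive_finite) auto
  also have "\<dots> \<le> (\<Sum>S\<in>Pow {1..N}. prob (U S) * q ^ (N + 1 - j))"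
    using U_Z by (intro sum_mono) auto
  also have "\<dots> = prob (\<Union>S\<in>Pow {1..N}. U S) * q ^ (N + 1 - j)"
    using U_sets
    by (subst finite_measure_finite_Union) (auto simp: sum_distrib_right disjoint_family_on_def U_def)
  also have "\<dots> \<le> q ^ (N + 1 - j)"
    using q_nonneg by (intro mult_left_le_one_le) auto
  finally show ?thesis .
qed

lemma AE_bern_I_defined: "AE \<omega> in M. bern_I_defined (sample \<omega>)"
proof -
  have "AE \<omega> in M. \<exists>c\<ge>1. c \<notin> bern_used (sample \<omega>) (j - 1) \<and> B j c \<omega>" if "1 \<le> j" for j
  proof (rule AE_I')
    have "prob (\<Inter>k. no_free_hit j (j - 1 + k)) \<le> q ^ k" for k
    proof -
      have "prob (\<Inter>k. no_free_hit j (j - 1 + k)) \<le> prob (no_free_hit j (j - 1 + k))"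
        by (rule finite_measure_mono[OF _ no_free_hit_sets[OF that]]) blast
      also have "\<dots> \<le> q ^ k"
        using prob_no_free_hit[OF that, of "j - 1 + k"] that by simp
      finally show ?thesis .
    qed
    moreover have "(\<lambda>k. q ^ k) \<longlonglongrightarrow> 0"
      using q_nonneg q_less_1 by (intro LIMSEQ_power_zero) auto
    ultimately have "prob (\<Inter>k. no_free_hit j (j - 1 + k)) \<le> 0"
      by (intro LIMSEQ_le_const) auto
    then show "(\<Inter>k. no_free_hit j (j - 1 + k)) \<in> null_sets M"
      using no_free_hit_sets[OF that] measure_nonneg[of M]
      by (auto simp: null_sets_def emeasure_eq_measure intro!: antisym)
    show "{\<omega> \<in> space M. \<not> (\<exists>c\<ge>1. c \<notin> bern_used (sample \<omega>) (j - 1) \<and> B j c \<omega>)}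
        \<subseteq> (\<Inter>k. no_free_hit j (j - 1 + k))"
      by (auto simp: no_free_hit_def)
  qed
  then have "AE \<omega> in M. \<forall>j. 1 \<le> j \<longrightarrow> (\<exists>c\<ge>1. c \<notin> bern_used (sample \<omega>) (j - 1) \<and> B j c \<omega>)"
    by (subst AE_all_countable) auto
  then show ?thesis by (simp add: bern_I_defined_def)
qed

lemma prob_bern_I_ge:
  assumes "1 \<le> j"
  shows "prob {\<omega> \<in> space M. j + k \<le> bern_I (sample \<omega>) j} \<le> q ^ k"
proof -
  have "{\<omega> \<in> space M. j + k \<le> bern_I (sample \<omega>) j} \<subseteq> no_free_hit j (j + k - 1)"
    unfolding no_free_hit_def
  proof safe
    fix \<omega> c assume "j + k \<le> bern_I (sample \<omega>) j" "c \<in> {1..j + k - 1}"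
      "c \<notin> bern_used (sample \<omega>) (j - 1)" "B j c \<omega>"
    then have "bern_I (sample \<omega>) j \<le> c" unfolding bern_I_def by (intro Least_le) simp
    with \<open>j + k \<le> bern_I (sample \<omega>) j\<close> \<open>c \<in> {1..j + k - 1}\<close> \<open>1 \<le> j\<close> show False by simp
  qed
  then have "prob {\<omega> \<in> space M. j + k \<le> bern_I (sample \<omega>) j} \<le> prob (no_free_hit j (j + k - 1))"
    using no_free_hit_sets[OF assms] by (intro finite_measure_mono) auto
  also have "\<dots> \<le> q ^ k"
    using prob_no_free_hit[OF assms, of "j + k - 1"] assms by simp
  finally show ?thesis .
qed

lemma AE_eventually_bern_I_less:
  assumes "summable (\<lambda>n. q ^ k n)"
  shows "AE \<omega> in M. eventually (\<lambda>n. bern_I (sample \<omega>) n < n + k n) sequentially"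
proof -
  define A where "A n = (if n = 0 then {} else {\<omega> \<in> space M. n + k n \<le> bern_I (sample \<omega>) n})" for n
  have A_sets: "A n \<in> events" for n
    unfolding A_def using measurable_I[of n] by (auto intro: predE pred_const_le)
  have "prob (A n) \<le> q ^ k n" for n
    using prob_bern_I_ge[of n "k n"] q_nonneg by (simp add: A_def)
  then have "summable (\<lambda>n. prob (A n))"
    by (intro summable_comparison_test'[OF assms, where N=0]) simp
  then have "AE \<omega> in M. eventually (\<lambda>n. \<omega> \<in> space M - A n) sequentially"
    using A_sets by (intro borel_cantelli_AE1) (auto simp: less_top[symmetric])
  then show ?thesis
  proof eventually_elim
    case (elim \<omega>)
    from elim eventually_ge_at_top[of 1] show ?case
      by eventually_elim (auto simp: A_def)
  qed
qed

lemma AE_bern_F_div_tendsto_zero: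
  assumes "\<And>n. 1 \<le> n \<Longrightarrow> a n > 0"
    and "filterlim (\<lambda>n. a n / ln (real n)) at_top sequentially"
  shows "AE \<omega> in M. (\<lambda>n. bern_F (sample \<omega>) n / a n) \<longlonglongrightarrow> 0"
proof -
  obtain c where "0 \<le> c" and summable: "summable (\<lambda>n. q ^ nat \<lceil>c * ln (real n)\<rceil>)"
    using summable_power_nat_ceiling_ln[OF q_nonneg q_less_1] by blast
  from AE_bern_I_defined AE_eventually_bern_I_less[OF summable]
  show ?thesis
  proof eventually_elim
    case (elim \<omega>)
    show ?case by (rule bern_F_div_tendsto_zero[OF elim(1) \<open>0 \<le> c\<close> elim(2) assms])
  qed
qed

end

theorem lemma2p2:
  fixes M :: "'w measure" and B :: "nat \<Rightarrow> nat \<Rightarrow> 'w \<Rightarrow> bool"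
    and q :: real and a :: "nat \<Rightarrow> real"
  assumes "prob_space M"
    and q: "0 \<le> q" "q < 1"
    and rv: "\<And>i j. 1 \<le> i \<Longrightarrow> 1 \<le> j \<Longrightarrow>
               B i j \<in> measurable M (count_space UNIV)"
    and indep: "prob_space.indep_vars M (\<lambda>_. count_space UNIV) (\<lambda>(i, j). B i j)
                  ({1..} \<times> {1..})"
    and bern: "\<And>i j. 1 \<le> i \<Longrightarrow> 1 \<le> j \<Longrightarrow>
               measure M {\<omega> \<in> space M. B i j \<omega>} = 1 - q"
    and a_pos: "\<And>n. 1 \<le> n \<Longrightarrow> a n > 0"
    and a_growth: "filterlim (\<lambda>n. a n / ln (real n)) at_top sequentially"
  shows "(AE \<omega> in M. (\<lambda>n. bern_F (\<lambda>i j. B i j \<omega>) n / a n) \<longlonglongrightarrow> 0)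
    \<and> (AE \<omega> in M. (\<lambda>n. bern_F (\<lambda>i j. B i j \<omega>) n / real n) \<longlonglongrightarrow> 0)"
proof -
  interpret bernoulli_model M B q
    using assms unfolding bernoulli_model_def bernoulli_model_axioms_def by blast
  have "filterlim (\<lambda>n. real n / ln (real n)) at_top sequentially" by real_asymp
  then have "AE \<omega> in M. (\<lambda>n. bern_F (\<lambda>i j. B i j \<omega>) n / real n) \<longlonglongrightarrow> 0"
    by (intro AE_bern_F_div_tendsto_zero) simp_all
  with AE_bern_F_div_tendsto_zero[OF a_pos a_growth] show ?thesis ..
qed

end
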